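(* Let $p\ge1$, $k\ge1$, $r\in\{1,\dots,p-1\}$, $q=p-r$. Let $c\in\mathbb R^p$ and $\Phi_0,\dots,\Phi_k\in\mathbb R^{p\times p}$, with $\Phi(\lambda)=\Phi_0-\sum_{i=1}^k\Phi_i\lambda^i$, satisfy: $\Phi_0$ is invertible; $c\in\operatorname{span}\Phi(1)$ and $\operatorname{rank}\Phi(1)=r$; and $\Phi(\lambda)$ has $q$ roots at unity and all others outside the unit circle. Let $\alpha,\beta\in\mathbb R^{p\times r}$ have full column rank with $\alpha\beta^\top=-\Phi(1)$, let $\Gamma_j=-\sum_{i=j+1}^k\Phi_i$, $H=\Phi_0-\sum_{i=1}^{k-1}\Gamma_i$, and $\chi(z)=\begin{bmatrix}\alpha_\perp^\top H\\\beta^\top\end{bmatrix}z$. Then $\chi$ is invertible and for $y=(y_{(1)}^\top,y_{(2)}^\top)^\top\in\mathbb R^q\times\mathbb R^r$, $$\chi^{-1}(y)=\beta_\perp(\alpha_\perp^\top H\beta_\perp)^{-1}y_{(1)}+\{I-\beta_\perp(\alpha_\perp^\top H\beta_\perp)^{-1}\alpha_\perp^\top H\}\beta(\beta^\top\beta)^{-1}y_{(2)}.$$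
   Context: Roots of $\Phi(\lambda)$ are roots of $\det\Phi(\lambda)$. For a $p\times r$ matrix $a$ of rank $r$, $a_\perp$ denotes a $p\times(p-r)$ matrix of rank $p-r$ with $a_\perp^\top a=0$. *)

theory Defs
  imports "HOL-Analysis.Analysis" "HOL-Computational_Algebra.Polynomial"
begin

definition Phi_poly :: "nat \<Rightarrow> (nat \<Rightarrow> real^'p^'p) \<Rightarrow> real poly^'p^'p" where
  "Phi_poly k Phi = (\<chi> a b. [:Phi 0 $ a $ b:] - (\<Sum>i=1..k. monom (Phi i $ a $ b) i))"

definition det_Phi :: "nat \<Rightarrow> (nat \<Rightarrow> real^'p^'p) \<Rightarrow> real poly" where
  "det_Phi k Phi = det (Phi_poly k Phi)"

definition Phi_one :: "nat \<Rightarrow> (nat \<Rightarrow> real^'p^'p) \<Rightarrow> real^'p^'p" where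
  "Phi_one k Phi = Phi 0 - (\<Sum>i=1..k. Phi i)"

definition Gamma :: "nat \<Rightarrow> (nat \<Rightarrow> real^'p^'p) \<Rightarrow> nat \<Rightarrow> real^'p^'p" where
  "Gamma k Phi j = - (\<Sum>i=j+1..k. Phi i)"

definition Hmat :: "nat \<Rightarrow> (nat \<Rightarrow> real^'p^'p) \<Rightarrow> real^'p^'p" where
  "Hmat k Phi = Phi 0 - (\<Sum>i=1..k-1. Gamma k Phi i)"

end

theory Submission
  imports Defs
begin

(* Write E = lambda - 1. Since -Phi'(1) = sum_i i Phi_i, the definition of H gives
   Phi(lambda) = Phi(1) + E (Phi(1) - H) + E^2 R(lambda) for a polynomial matrix R.
   As Phi(1) beta_perp = 0, multiplying Phi(lambda) on the right by the constant invertible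
   matrix [beta_perp beta] makes its first q columns divisible by E, so that
   det Phi(lambda) = const * E^q * det D(lambda) with D(1) = [(Phi(1) - H) beta_perp, Phi(1) beta].
   If alpha_perp' H beta_perp v = 0 with v <> 0, then (Phi(1) - H) beta_perp v = - H beta_perp v
   lies in the kernel of alpha_perp', which is the column space of alpha and of Phi(1) beta;
   so D(1) is singular and 1 would be a root of det Phi of multiplicity greater than q.
   Once alpha_perp' H beta_perp is invertible, the formula for the inverse of chi is checked
   directly, and chi is injective because the kernel of beta' is the column space of beta_perp. *)

lemma transpose_0 [simp]: "transpose (0 :: 'a::zero^'n^'m) = 0"
  by (simp add: transpose_def vec_eq_iff)

lemma transpose_mult_eq_0_swap:
  assumes "transpose Y ** X = (0 :: 'a::comm_semiring_1^'m^'k)"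
  shows "transpose X ** Y = 0"
  using arg_cong[OF assms, of transpose] by (simp add: matrix_transpose_mul)

lemma matrix_mul_lneg: "(- A :: 'a::ring_1^'n^'m) ** B = - (A ** B)"
  by (simp add: matrix_matrix_mult_def vec_eq_iff sum_negf)

lemma matrix_diff_ldistrib: "(A :: 'a::ring_1^'n^'m) ** (B - C) = A ** B - A ** C"
  by (simp add: matrix_matrix_mult_def vec_eq_iff sum_subtractf algebra_simps)

lemma matrix_diff_rdistrib: "(A - B :: 'a::ring_1^'n^'m) ** C = A ** C - B ** C"
  by (simp add: matrix_matrix_mult_def vec_eq_iff sum_subtractf algebra_simps)

lemma matrix_vector_mult_lneg: "(- A :: 'a::ring_1^'n^'m) *v x = - (A *v x)"
  by (simp add: matrix_vector_mult_def vec_eq_iff sum_negf)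

lemma matrix_vector_mult_rneg: "(A :: 'a::ring_1^'n^'m) *v (- x) = - (A *v x)"
  by (simp add: matrix_vector_mult_def vec_eq_iff sum_negf)

lemma matrix_inv_right:
  fixes A :: "'a::semiring_1^'n^'m"
  assumes "invertible A"
  shows "A ** matrix_inv A = mat 1"
  using assms unfolding invertible_def matrix_inv_def by (rule someI2_ex) blast

lemma invertible_iff_kernel_trivial:
  fixes A :: "'a::field^'n^'n"
  shows "invertible A \<longleftrightarrow> (\<forall>x. A *v x = 0 \<longrightarrow> x = 0)"
  by (simp add: invertible_left_inverse matrix_left_invertible_ker)

lemma gram_kernel_subset_kernel:
  fixes X :: "real^'m^'n"
  assumes "(transpose X ** X) *v x = 0"
  shows "X *v x = 0"
proof -
  have "(X *v x) \<bullet> (X *v x) = x \<bullet> ((transpose X ** X) *v x)"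
    by (metis dot_lmul_matrix matrix_vector_mul_assoc vector_transpose_matrix)
  then show ?thesis using assms by simp
qed

lemma invertible_gram:
  fixes X :: "real^'m^'n"
  assumes "rank X = CARD('m)"
  shows "invertible (transpose X ** X)"
  unfolding invertible_iff_kernel_trivial
proof (intro allI impI)
  fix x assume "(transpose X ** X) *v x = 0"
  then have "X *v x = 0" by (rule gram_kernel_subset_kernel)
  with assms show "x = 0" by (metis full_rank_injective injD matrix_vector_mult_0_right)
qed

lemma orthogonal_ranges:
  fixes X :: "real^'m^'n" and Y :: "real^'k^'n"
  assumes "transpose Y ** X = 0"
  shows "(X *v a) \<bullet> (Y *v b) = 0"
proof -
  have "(Y *v b) \<bullet> (X *v a) = b \<bullet> ((transpose Y ** X) *v a)"
    by (metis dot_lmul_matrix matrix_vector_mul_assoc vector_transpose_matrix)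
  then show ?thesis using assms by (simp add: inner_commute)
qed

lemma kernel_transpose_subset_range:
  fixes X :: "real^'m^'n" and Y :: "real^'k^'n"
  assumes orth: "transpose Y ** X = 0" and rank: "rank X + rank Y = CARD('n)"
    and z: "transpose Y *v z = 0"
  shows "z \<in> range ((*v) X)"
proof -
  let ?A = "range ((*v) X)" and ?B = "range ((*v) Y)"
  have "dim (?A \<union> ?B) = dim ?A + dim ?B"
    using orthogonal_ranges[OF orth] by (intro dim_orthogonal_sum) blast
  also have "\<dots> = CARD('n)" using rank by (simp add: rank_dim_range)
  finally have "z \<in> span (?A \<union> ?B)"
    using dim_eq_full[of "?A \<union> ?B"] by simp
  then obtain x y where "x \<in> span ?A" "y \<in> span ?B" "z = x + y"
    by (auto simp: span_Un)
  moreover have "span ?A = ?A" "span ?B = ?B"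
    using span_eq_iff subspace_UNIV linear_subspace_image matrix_vector_mul_linear by blast+
  ultimately obtain a b where zab: "z = X *v a + Y *v b"
    by auto
  have "(transpose Y ** Y) *v b = transpose Y *v z"
    unfolding zab matrix_vector_right_distrib matrix_vector_mul_assoc orth by simp
  then have "Y *v b = 0" using z by (metis gram_kernel_subset_kernel)
  then show ?thesis using zab by simp
qed

definition join_cols :: "('q + 'r \<Rightarrow> 'n) \<Rightarrow> 'a^'q^'m \<Rightarrow> 'a^'r^'m \<Rightarrow> 'a^'n^'m" where
  "join_cols h X Y = (\<chi> a j. case inv h j of Inl i \<Rightarrow> X $ a $ i | Inr i \<Rightarrow> Y $ a $ i)"

definition join_vec :: "('q + 'r \<Rightarrow> 'n) \<Rightarrow> 'a^'q \<Rightarrow> 'a^'r \<Rightarrow> 'a^'n" where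
  "join_vec h x y = (\<chi> j. case inv h j of Inl i \<Rightarrow> x $ i | Inr i \<Rightarrow> y $ i)"

lemma ex_bij_Plus:
  assumes "CARD('n) = CARD('q) + CARD('r)"
  shows "\<exists>h :: 'q::finite + 'r::finite \<Rightarrow> 'n::finite. bij h"
proof -
  have "card (UNIV :: ('q + 'r) set) = card (UNIV :: 'n set)"
    using assms by (simp add: card_sum)
  then show ?thesis
    using finite_same_card_bij[of "UNIV :: ('q + 'r) set" "UNIV :: 'n set"] by auto
qed

lemma sum_UNIV_bij_Plus:
  fixes h :: "'q::finite + 'r::finite \<Rightarrow> 'n::finite"
  assumes "bij h"
  shows "(\<Sum>j\<in>UNIV. f j) = (\<Sum>i\<in>UNIV. f (h (Inl i))) + (\<Sum>i\<in>UNIV. f (h (Inr i)))"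
proof -
  have "(\<Sum>j\<in>UNIV. f j) = (\<Sum>s\<in>UNIV <+> UNIV. f (h s))"
    using sum.reindex_bij_betw[of h UNIV UNIV f] assms by simp
  also have "\<dots> = (\<Sum>i\<in>UNIV. f (h (Inl i))) + (\<Sum>i\<in>UNIV. f (h (Inr i)))"
    by (subst sum.Plus) (auto simp: comp_def)
  finally show ?thesis .
qed

lemma prod_UNIV_bij_Plus:
  fixes h :: "'q::finite + 'r::finite \<Rightarrow> 'n::finite"
  assumes "bij h"
  shows "(\<Prod>j\<in>UNIV. f j) = (\<Prod>i\<in>UNIV. f (h (Inl i))) * (\<Prod>i\<in>UNIV. f (h (Inr i)))"
proof -
  have "(\<Prod>j\<in>UNIV. f j) = (\<Prod>s\<in>UNIV <+> UNIV. f (h s))"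
    using prod.reindex_bij_betw[of h UNIV UNIV f] assms by simp
  also have "\<dots> = (\<Prod>i\<in>UNIV. f (h (Inl i))) * (\<Prod>i\<in>UNIV. f (h (Inr i)))"
    by (subst prod.Plus) (auto simp: comp_def)
  finally show ?thesis .
qed

lemma join_cols_mult_join_vec:
  fixes X :: "'a::semiring_1^'q::finite^'m" and Y :: "'a^'r::finite^'m"
    and h :: "'q + 'r \<Rightarrow> 'n::finite"
  assumes "bij h"
  shows "join_cols h X Y *v join_vec h x y = X *v x + Y *v y"
  using assms
  by (simp add: vec_eq_iff matrix_vector_mult_def join_cols_def join_vec_def sum_UNIV_bij_Plus
      bij_is_inj)

lemma join_vec_component:
  fixes h :: "'q::finite + 'r::finite \<Rightarrow> 'n::finite"
  assumes "bij h"
  shows "join_vec h x y $ h (Inl i) = x $ i" and "join_vec h x y $ h (Inr i') = y $ i'"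
  using assms by (simp_all add: join_vec_def bij_is_inj)

lemma join_vec_eq_0_iff:
  fixes h :: "'q::finite + 'r::finite \<Rightarrow> 'n::finite"
  assumes "bij h"
  shows "join_vec h x y = 0 \<longleftrightarrow> x = 0 \<and> y = 0"
proof
  assume "join_vec h x y = 0"
  then show "x = 0 \<and> y = 0"
    using join_vec_component[OF assms] by (metis vec_eq_iff zero_index)
qed (simp add: join_vec_def vec_eq_iff split: sum.split)

lemma join_vec_surj:
  fixes h :: "'q::finite + 'r::finite \<Rightarrow> 'n::finite"
  assumes "bij h"
  obtains x y where "w = join_vec h x y"
proof
  have "h (inv h j) = j" for j
    using assms by (simp add: bij_is_surj surj_f_inv_f)
  then show "w = join_vec h (\<chi> i. w $ h (Inl i)) (\<chi> i. w $ h (Inr i))"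
    by (auto simp: vec_eq_iff join_vec_def split: sum.split) metis+
qed

lemma matrix_mult_join_cols:
  "A ** join_cols h X Y = join_cols h (A ** X) (A ** Y)"
  by (simp add: vec_eq_iff matrix_matrix_mult_def join_cols_def split: sum.split)

lemma det_join_cols_scale:
  fixes X :: "'a::comm_ring_1^'q::finite^'n" and Y :: "'a^'r::finite^'n"
    and h :: "'q + 'r \<Rightarrow> 'n::finite"
  assumes "bij h"
  shows "det (join_cols h (\<chi> a i. c * X $ a $ i) Y) = c ^ CARD('q) * det (join_cols h X Y)"
proof -
  define d where "d j = (case inv h j of Inl i \<Rightarrow> c | Inr i \<Rightarrow> 1)" for j
  let ?cX = "\<chi> a i. c * X $ a $ i"
  have "det (join_cols h ?cX Y) = det (transpose (join_cols h ?cX Y))"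
    by simp
  also have "transpose (join_cols h ?cX Y) = (\<chi> j. d j *s column j (join_cols h X Y))"
    by (simp add: vec_eq_iff transpose_def column_def join_cols_def d_def split: sum.split)
  also have "det \<dots> = prod d UNIV * det (\<chi> j. column j (join_cols h X Y))"
    by (rule det_rows_mul)
  also have "(\<chi> j. column j (join_cols h X Y)) = transpose (join_cols h X Y)"
    by (simp add: vec_eq_iff transpose_def column_def)
  also have "prod d UNIV = c ^ CARD('q)"
    using assms by (simp add: prod_UNIV_bij_Plus d_def bij_is_inj)
  finally show ?thesis by simp
qed

lemma invertible_join_cols:
  fixes X :: "real^'q::finite^'n" and Y :: "real^'r::finite^'n"
    and h :: "'q + 'r \<Rightarrow> 'n::finite"
  assumes "bij h" and "transpose Y ** X = 0"
    and "rank X = CARD('q)" and "rank Y = CARD('r)"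
  shows "invertible (join_cols h X Y)"
  unfolding invertible_iff_kernel_trivial
proof (intro allI impI)
  fix w assume w: "join_cols h X Y *v w = 0"
  obtain x y where xy: "w = join_vec h x y" using join_vec_surj[OF assms(1)] .
  with w have Xx_Yy: "X *v x + Y *v y = 0" by (simp add: join_cols_mult_join_vec assms(1))
  have "(transpose Y ** Y) *v y = transpose Y *v (X *v x + Y *v y)"
    unfolding matrix_vector_right_distrib matrix_vector_mul_assoc assms(2) by simp
  then have "(transpose Y ** Y) *v y = 0"
    unfolding Xx_Yy by simp
  then have "Y *v y = 0" by (rule gram_kernel_subset_kernel)
  then have "y = 0" using assms(4) by (metis full_rank_injective injD matrix_vector_mult_0_right)
  moreover have "x = 0"
    using Xx_Yy \<open>Y *v y = 0\<close> assms(3)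
    by (metis add_0_right full_rank_injective injD matrix_vector_mult_0_right)
  ultimately show "w = 0" by (simp add: xy join_vec_eq_0_iff[OF assms(1)])
qed

definition const_matrix :: "'a::zero^'n^'m \<Rightarrow> 'a poly^'n^'m" where
  "const_matrix A = (\<chi> i j. [:A $ i $ j:])"

definition eval_matrix :: "'a::comm_semiring_0 poly^'n^'m \<Rightarrow> 'a \<Rightarrow> 'a^'n^'m" where
  "eval_matrix A x = (\<chi> i j. poly (A $ i $ j) x)"

lemma poly_det: "poly (det A) x = det (eval_matrix A x)"
  unfolding det_def eval_matrix_def by (simp add: poly_sum poly_prod)

lemma det_const_matrix: "det (const_matrix A) = [:det A:]"
  unfolding det_def const_matrix_def by (simp add: prod_to_poly of_int_poly sum_to_poly mult_ac)

lemma eval_matrix_mult: "eval_matrix (A ** B) x = eval_matrix A x ** eval_matrix B x"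
  by (simp add: eval_matrix_def matrix_matrix_mult_def vec_eq_iff poly_sum)

lemma eval_const_matrix [simp]: "eval_matrix (const_matrix A) x = A"
  by (simp add: eval_matrix_def const_matrix_def vec_eq_iff)

lemma eval_matrix_join_cols:
  "eval_matrix (join_cols h X Y) x = join_cols h (eval_matrix X x) (eval_matrix Y x)"
  by (simp add: eval_matrix_def join_cols_def vec_eq_iff split: sum.split)

lemma const_matrix_join_cols:
  "const_matrix (join_cols h X Y) = join_cols h (const_matrix X) (const_matrix Y)"
  by (simp add: const_matrix_def join_cols_def vec_eq_iff split: sum.split)

lemma poly_second_order_expansion:
  fixes f :: "'a::idom poly"
  obtains r where "f = [:poly f c:] + [:-c, 1:] * [:poly (pderiv f) c:] + [:-c, 1:]^2 * r"
proof -
  define E where "E = [:-c, 1:]"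
  define g where "g = synthetic_div f c"
  define r where "r = synthetic_div g c"
  have f: "f = E * g + [:poly f c:]" and g: "g = E * r + [:poly g c:]"
    using synthetic_div_correct'[of c f] synthetic_div_correct'[of c g]
    by (simp_all add: E_def g_def r_def)
  have "pderiv E = 1" by (simp add: E_def pderiv_pCons)
  then have "pderiv f = E * pderiv g + g"
    by (subst f) (simp add: pderiv_add pderiv_mult)
  then have "poly (pderiv f) c = poly g c" by (simp add: E_def)
  moreover have "f = [:poly f c:] + E * [:poly g c:] + E^2 * r"
    by (subst f, subst g) (simp add: algebra_simps power2_eq_square)
  ultimately show ?thesis using that by (simp add: E_def)
qed

lemma order_det_gt_card:
  fixes F :: "'a::field poly^'n::finite^'n" and C0 C1 :: "'a^'n^'n"
    and X :: "'a^'q::finite^'n" and Y :: "'a^'r::finite^'n" and h :: "'q + 'r \<Rightarrow> 'n"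
  assumes h: "bij h"
    and F: "\<And>a b. F $ a $ b = [:C0 $ a $ b:] + [:-c, 1:] * [:C1 $ a $ b:] + [:-c, 1:]^2 * R a b"
    and C0X: "C0 ** X = 0"
    and Q: "invertible (join_cols h X Y)"
    and N: "\<not> invertible (join_cols h (C1 ** X) (C0 ** Y))"
    and "det F \<noteq> 0"
  shows "CARD('q) < order c (det F)"
proof -
  define E where "E = [:-c, 1:]"
  have FE: "F $ a $ b = [:C0 $ a $ b:] + E * [:C1 $ a $ b:] + E^2 * R a b" for a b
    unfolding E_def by (rule F)
  define G :: "'a poly^'q^'n" where
    "G = (\<chi> a i. [:(C1 ** X) $ a $ i:] + E * ((\<chi> a b. R a b) ** const_matrix X) $ a $ i)"
  have FX: "F ** const_matrix X = (\<chi> a i. E * G $ a $ i)"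
  proof -
    have "(F ** const_matrix X) $ a $ i = E * G $ a $ i" for a i
    proof -
      have "(F ** const_matrix X) $ a $ i
          = (\<Sum>b\<in>UNIV. [:C0 $ a $ b * X $ b $ i:] + E * [:C1 $ a $ b * X $ b $ i:]
              + E^2 * (R a b * [:X $ b $ i:]))"
        unfolding matrix_matrix_mult_def
        by (simp, intro sum.cong refl) (simp add: FE const_matrix_def algebra_simps)
      also have "\<dots> = [:(C0 ** X) $ a $ i:] + E * [:(C1 ** X) $ a $ i:]
          + E^2 * ((\<chi> a b. R a b) ** const_matrix X) $ a $ i"
        by (simp add: sum.distrib sum_distrib_left sum_to_poly smult_sum matrix_matrix_mult_def
            const_matrix_def)
      also have "\<dots> = E * G $ a $ i"
        by (simp add: C0X G_def algebra_simps power2_eq_square)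
      finally show ?thesis .
    qed
    then show ?thesis by (simp add: vec_eq_iff)
  qed
  have "det F * [:det (join_cols h X Y):] = det (F ** const_matrix (join_cols h X Y))"
    by (simp add: det_mul det_const_matrix)
  also have "F ** const_matrix (join_cols h X Y)
      = join_cols h (\<chi> a i. E * G $ a $ i) (F ** const_matrix Y)"
    by (simp add: const_matrix_join_cols matrix_mult_join_cols FX)
  also have "det \<dots> = E ^ CARD('q) * det (join_cols h G (F ** const_matrix Y))"
    by (rule det_join_cols_scale[OF h])
  finally have factor: "smult (det (join_cols h X Y)) (det F)
      = E ^ CARD('q) * det (join_cols h G (F ** const_matrix Y))"
    by (simp add: mult.commute)
  have "eval_matrix F c = C0" and "eval_matrix G c = C1 ** X"
    by (simp_all add: eval_matrix_def vec_eq_iff F G_def E_def)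
  then have "poly (det (join_cols h G (F ** const_matrix Y))) c = 0"
    using N by (simp add: poly_det eval_matrix_join_cols eval_matrix_mult invertible_det_nz)
  then have "E dvd det (join_cols h G (F ** const_matrix Y))"
    by (simp add: poly_eq_0_iff_dvd E_def)
  then have "E ^ Suc CARD('q) dvd smult (det (join_cols h X Y)) (det F)"
    unfolding factor power_Suc2 by (intro mult_dvd_mono dvd_refl)
  then have "E ^ Suc CARD('q) dvd det F"
    using Q by (simp add: dvd_smult_cancel invertible_det_nz)
  then show ?thesis
    using \<open>det F \<noteq> 0\<close> order_divides[of c "Suc CARD('q)" "det F"] by (simp add: E_def)
qed

lemma sum_tail_sums:
  fixes f :: "nat \<Rightarrow> 'a::real_vector"
  shows "(\<Sum>i=1..k-1. \<Sum>j=i+1..k. f j) = (\<Sum>j=1..k. (real j - 1) *\<^sub>R f j)"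
proof (induction k)
  case (Suc k)
  have "(\<Sum>i=1..Suc k-1. \<Sum>j=i+1..Suc k. f j) = (\<Sum>i=1..k. (\<Sum>j=i+1..k. f j) + f (Suc k))"
    by (intro sum.cong) auto
  also have "\<dots> = (\<Sum>i=1..k. \<Sum>j=i+1..k. f j) + real k *\<^sub>R f (Suc k)"
    by (simp add: sum.distrib sum_constant_scaleR)
  also have "(\<Sum>i=1..k. \<Sum>j=i+1..k. f j) = (\<Sum>i=1..k-1. \<Sum>j=i+1..k. f j)"
    by (cases k) simp_all
  finally show ?case using Suc by simp
qed simp

lemma Hmat_eq: "Hmat k Phi = Phi 0 + (\<Sum>i=1..k. (real i - 1) *\<^sub>R Phi i)"
  unfolding Hmat_def Gamma_def sum_negf sum_tail_sums by simp

lemma eval_Phi_poly_0: "eval_matrix (Phi_poly k Phi) 0 = Phi 0"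
  by (simp add: eval_matrix_def Phi_poly_def vec_eq_iff poly_sum poly_monom)

lemma poly_Phi_poly_1: "poly (Phi_poly k Phi $ a $ b) 1 = Phi_one k Phi $ a $ b"
  by (simp add: Phi_poly_def Phi_one_def poly_sum poly_monom)

lemma poly_pderiv_Phi_poly_1:
  "poly (pderiv (Phi_poly k Phi $ a $ b)) 1 = (Phi_one k Phi - Hmat k Phi) $ a $ b"
proof -
  have "poly (pderiv (Phi_poly k Phi $ a $ b)) 1 = - (\<Sum>i=1..k. real i * Phi i $ a $ b)"
    by (simp add: Phi_poly_def pderiv_diff higher_pderiv_sum[of 1, simplified] pderiv_monom
        poly_sum poly_monom)
  also have "\<dots> = (Phi_one k Phi - Hmat k Phi) $ a $ b"
    by (simp add: Phi_one_def Hmat_eq sum_negf algebra_simps sum.distrib[symmetric])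
  finally show ?thesis .
qed

lemma Phi_poly_expansion_at_1:
  obtains R where "\<And>a b. Phi_poly k Phi $ a $ b = [:Phi_one k Phi $ a $ b:]
      + [:-1, 1:] * [:(Phi_one k Phi - Hmat k Phi) $ a $ b:] + [:-1, 1:]^2 * R a b"
proof -
  have "\<exists>r. Phi_poly k Phi $ a $ b = [:Phi_one k Phi $ a $ b:]
      + [:-1, 1:] * [:(Phi_one k Phi - Hmat k Phi) $ a $ b:] + [:-1, 1:]^2 * r" for a b
    using poly_second_order_expansion[of "Phi_poly k Phi $ a $ b" 1]
    by (metis poly_Phi_poly_1 poly_pderiv_Phi_poly_1)
  then show ?thesis using that by metis
qed

lemma det_Phi_nonzero:
  assumes "invertible (Phi 0)"
  shows "det_Phi k Phi \<noteq> 0"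
proof
  assume "det_Phi k Phi = 0"
  then have "det (Phi 0) = 0"
    using poly_det[of "Phi_poly k Phi" 0] by (simp add: det_Phi_def eval_Phi_poly_0)
  with assms show False by (simp add: invertible_det_nz)
qed

lemma invertible_perp_Hmat_perp:
  fixes Phi :: "nat \<Rightarrow> real^'p^'p"
    and alpha beta :: "real^'r^'p"
    and alpha_perp beta_perp :: "real^'q^'p"
  assumes card: "CARD('p) = CARD('q) + CARD('r)"
    and Phi0_inv: "invertible (Phi 0)"
    and order_le: "order 1 (det_Phi k Phi) \<le> CARD('q)"
    and alpha_rank: "rank alpha = CARD('r)"
    and beta_rank: "rank beta = CARD('r)"
    and alpha_beta: "alpha ** transpose beta = - Phi_one k Phi"
    and alpha_perp_rank: "rank alpha_perp = CARD('q)"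
    and alpha_perp_orth: "transpose alpha_perp ** alpha = 0"
    and beta_perp_rank: "rank beta_perp = CARD('q)"
    and beta_perp_orth: "transpose beta_perp ** beta = 0"
  shows "invertible (transpose alpha_perp ** Hmat k Phi ** beta_perp)"
proof (rule ccontr)
  define H where "H = Hmat k Phi"
  define C0 where "C0 = Phi_one k Phi"
  assume "\<not> invertible (transpose alpha_perp ** Hmat k Phi ** beta_perp)"
  then obtain v where "v \<noteq> 0" and v: "(transpose alpha_perp ** H ** beta_perp) *v v = 0"
    unfolding invertible_iff_kernel_trivial H_def by blast
  obtain h :: "'q + 'r \<Rightarrow> 'p" where h: "bij h" using ex_bij_Plus[OF card] by blast
  have C0: "C0 = - (alpha ** transpose beta)"
    using alpha_beta by (simp add: C0_def)
  have beta_beta_perp: "transpose beta ** beta_perp = 0"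
    using transpose_mult_eq_0_swap[OF beta_perp_orth] .
  have C0_beta_perp: "C0 ** beta_perp = 0"
    by (simp add: C0 matrix_mul_lneg beta_beta_perp flip: matrix_mul_assoc)
  define z where "z = (C0 - H) *v (beta_perp *v v)"
  have z: "z = - (H *v (beta_perp *v v))"
    by (simp add: z_def matrix_vector_mul_assoc matrix_diff_rdistrib C0_beta_perp
        matrix_vector_mult_lneg)
  have "transpose alpha_perp *v z = 0"
    using v by (simp add: z matrix_vector_mult_rneg matrix_vector_mul_assoc matrix_mul_assoc
        del: transpose_matrix_vector)
  then obtain a where a: "z = alpha *v a"
    using kernel_transpose_subset_range[OF alpha_perp_orth] alpha_rank alpha_perp_rank card by auto
  define u where "u = matrix_inv (transpose beta ** beta) *v a"
  have "(C0 ** beta) *v u = - z"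
    using matrix_inv_right[OF invertible_gram[OF beta_rank]]
    by (simp add: a u_def C0 matrix_mul_lneg matrix_vector_mult_lneg matrix_vector_mul_assoc
        flip: matrix_mul_assoc)
  then have "join_cols h ((C0 - H) ** beta_perp) (C0 ** beta) *v join_vec h v u = 0"
    by (simp add: join_cols_mult_join_vec[OF h] z_def matrix_vector_mul_assoc)
  moreover have "join_vec h v u \<noteq> 0"
    using \<open>v \<noteq> 0\<close> by (simp add: join_vec_eq_0_iff[OF h])
  ultimately have N: "\<not> invertible (join_cols h ((C0 - H) ** beta_perp) (C0 ** beta))"
    unfolding invertible_iff_kernel_trivial by blast
  have Q: "invertible (join_cols h beta_perp beta)"
    using invertible_join_cols[OF h beta_beta_perp beta_perp_rank beta_rank] .
  obtain R where R: "\<And>a b. Phi_poly k Phi $ a $ b = [:C0 $ a $ b:]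
      + [:-1, 1:] * [:(C0 - H) $ a $ b:] + [:-1, 1:]^2 * R a b"
    using Phi_poly_expansion_at_1 unfolding C0_def H_def by blast
  have "CARD('q) < order 1 (det_Phi k Phi)"
    using order_det_gt_card[OF h R C0_beta_perp Q N] det_Phi_nonzero[where Phi = Phi, OF Phi0_inv]
    by (simp add: det_Phi_def)
  with order_le show False by simp
qed

lemma stacked_map_inverse:
  fixes P :: "real^'p^'q" and B :: "real^'r^'p" and B_perp :: "real^'q^'p"
  assumes card: "CARD('p) = CARD('q) + CARD('r)"
    and B_rank: "rank B = CARD('r)" and B_perp_rank: "rank B_perp = CARD('q)"
    and B_perp_orth: "transpose B_perp ** B = 0"
    and PB_inv: "invertible (P ** B_perp)"
  defines "chi \<equiv> \<lambda>z. (P *v z, transpose B *v z)"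
    and "M \<equiv> matrix_inv (P ** B_perp)"
  shows "bij chi"
    and "inv chi (y1, y2) = B_perp *v (M *v y1)
           + (mat 1 - B_perp ** M ** P) *v (B *v (matrix_inv (transpose B ** B) *v y2))"
proof -
  have orth: "transpose B ** B_perp = 0"
    using transpose_mult_eq_0_swap[OF B_perp_orth] .
  define G where "G = matrix_inv (transpose B ** B)"
  define F where
    "F y1 y2 = B_perp *v (M *v y1) + (mat 1 - B_perp ** M ** P) *v (B *v (G *v y2))" for y1 y2
  have PBM: "P ** B_perp ** M = mat 1"
    unfolding M_def by (rule matrix_inv_right[OF PB_inv])
  have BBG: "transpose B ** B ** G = mat 1"
    unfolding G_def by (rule matrix_inv_right[OF invertible_gram[OF B_rank]])
  have chi_F: "chi (F y1 y2) = (y1, y2)" for y1 y2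
  proof -
    have "P *v F y1 y2 = y1"
      using PBM by (simp add: F_def algebra_simps matrix_vector_mul_assoc matrix_mul_assoc
          matrix_diff_ldistrib)
    moreover have "transpose B *v F y1 y2 = y2"
      using BBG orth by (simp add: F_def algebra_simps matrix_vector_mul_assoc matrix_mul_assoc
          matrix_diff_ldistrib del: transpose_matrix_vector)
    ultimately show ?thesis by (simp add: chi_def)
  qed
  have "inj chi"
  proof (rule injI)
    fix x y assume "chi x = chi y"
    then have "P *v (x - y) = 0" and "transpose B *v (x - y) = 0"
      by (simp_all add: chi_def matrix_vector_mult_diff_distrib del: transpose_matrix_vector)
    obtain a where a: "x - y = B_perp *v a"
      using kernel_transpose_subset_range[OF orth] \<open>transpose B *v (x - y) = 0\<close>
        B_rank B_perp_rank card by fastforce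
    have "(P ** B_perp) *v a = 0"
      using \<open>P *v (x - y) = 0\<close> by (simp add: a matrix_vector_mul_assoc)
    then have "a = 0" using PB_inv by (simp add: invertible_iff_kernel_trivial)
    then show "x = y" using a by simp
  qed
  moreover have "surj chi"
  proof (rule surjI)
    show "chi (F (fst y) (snd y)) = y" for y using chi_F by simp
  qed
  ultimately show "bij chi" by (simp add: bij_def)
  show "inv chi (y1, y2) = F y1 y2"
    using inv_f_eq[OF \<open>inj chi\<close> chi_F] .
qed

theorem lemmaE1:
  fixes k :: nat
    and c :: "real^'p"
    and Phi :: "nat \<Rightarrow> real^'p^'p"
    and alpha beta :: "real^'r^'p"
    and alpha_perp beta_perp :: "real^'q^'p"
  assumes card: "CARD('p) = CARD('q) + CARD('r)"
    and k: "k \<ge> 1"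
    and Phi0_inv: "invertible (Phi 0)"
    and c_span: "c \<in> span (columns (Phi_one k Phi))"
    and rank_Phi1: "rank (Phi_one k Phi) = CARD('r)"
    and roots_unity: "order 1 (det_Phi k Phi) = CARD('q)"
    and roots_outside: "\<forall>z::complex. poly (map_poly of_real (det_Phi k Phi)) z = 0
                          \<longrightarrow> z = 1 \<or> cmod z > 1"
    and alpha_rank: "rank alpha = CARD('r)"
    and beta_rank: "rank beta = CARD('r)"
    and alpha_beta: "alpha ** transpose beta = - Phi_one k Phi"
    and alpha_perp_rank: "rank alpha_perp = CARD('q)"
    and alpha_perp_orth: "transpose alpha_perp ** alpha = 0"
    and beta_perp_rank: "rank beta_perp = CARD('q)"
    and beta_perp_orth: "transpose beta_perp ** beta = 0"
  shows "let H = Hmat k Phi;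
             chi = (\<lambda>z::real^'p. ((transpose alpha_perp ** H) *v z, transpose beta *v z));
             M = matrix_inv (transpose alpha_perp ** H ** beta_perp)
         in bij chi \<and> invertible (transpose alpha_perp ** H ** beta_perp) \<and>
            (\<forall>y1 y2. inv chi (y1, y2) =
                beta_perp *v (M *v y1)
              + (mat 1 - beta_perp ** M ** transpose alpha_perp ** H)
                  *v (beta *v (matrix_inv (transpose beta ** beta) *v y2)))"
proof -
  have "invertible (transpose alpha_perp ** Hmat k Phi ** beta_perp)"
    using invertible_perp_Hmat_perp[OF card Phi0_inv _ alpha_rank beta_rank alpha_beta
        alpha_perp_rank alpha_perp_orth beta_perp_rank beta_perp_orth] roots_unity
    by simp
  then show ?thesis
    using stacked_map_inverse[OF card beta_rank beta_perp_rank beta_perp_orth,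
        of "transpose alpha_perp ** Hmat k Phi"]
    unfolding Let_def by (simp add: matrix_mul_assoc)
qed

end
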